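(* Let $G=(V(G),E(G))$ be a graph, let $x\in V(G)$, and let $w = UxZx$ be a word-representant of $G$, where $U$ and $Z$ are words, $Z$ contains no occurrence of $x$, and $Z$ contains every letter of $V(G)\setminus\{x\}$. Then the word $w' = UxZ$ also represents $G$.
   Context: All graphs are simple and undirected. For a word $w$ and distinct letters $x,y$, we say $x$ and $y$ alternate in $w$ if deleting all letters other than $x$ and $y$ from $w$ yields either $xyxy\ldots$ or $yxyx\ldots$ (of odd or even length); in particular, if each of $x,y$ occurs once, they alternate. A word $w$ over the alphabet $V(G)$ represents $G$ (is a word-representant of $G$) if every letter of $V(G)$ occurs in $w$ and, for all distinct $x,y\in V(G)$, $xy\in E(G)$ if and only if $x$ and $y$ alternate in $w$. *)

theory Defs
  imports Main
begin

definition simple_graph :: "'a set \<Rightarrow> ('a \<Rightarrow> 'a \<Rightarrow> bool) \<Rightarrow> bool" where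
  "simple_graph V E \<longleftrightarrow> finite V \<and>
     (\<forall>x y. E x y \<longrightarrow> x \<in> V \<and> y \<in> V \<and> x \<noteq> y \<and> E y x)"

text \<open>x and y alternate in w: deleting all other letters yields xyxy... or yxyx...,
i.e. consecutive letters of the restricted word differ.\<close>
definition alternate :: "'a list \<Rightarrow> 'a \<Rightarrow> 'a \<Rightarrow> bool" where
  "alternate w x y \<longleftrightarrow>
     (let u = filter (\<lambda>c. c = x \<or> c = y) w in
      \<forall>i. Suc i < length u \<longrightarrow> u ! i \<noteq> u ! Suc i)"

definition represents :: "'a set \<Rightarrow> ('a \<Rightarrow> 'a \<Rightarrow> bool) \<Rightarrow> 'a list \<Rightarrow> bool" where
  "represents V E w \<longleftrightarrow> set w = V \<and>
     (\<forall>x\<in>V. \<forall>y\<in>V. x \<noteq> y \<longrightarrow> (E x y \<longleftrightarrow> alternate w x y))"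

end

theory Submission
  imports Defs
begin

text \<open>Removing the final x only affects the restrictions of the word to pairs {x, y}.
Every such y occurs in Z, which contains no x, so in that restriction the final x is
preceded by y: it neither creates nor removes a repeated letter.\<close>

lemma alternate_iff_successively:
  "alternate w x y \<longleftrightarrow> successively (\<noteq>) (filter (\<lambda>c. c = x \<or> c = y) w)"
  unfolding alternate_def Let_def successively_conv_nth by simp

lemma alternate_commute: "alternate w x y \<longleftrightarrow> alternate w y x"
  unfolding alternate_def by (simp add: disj_commute)

lemma alternate_snoc_other:
  assumes "a \<noteq> x" "b \<noteq> x"
  shows "alternate (w @ [x]) a b \<longleftrightarrow> alternate w a b"
  using assms by (simp add: alternate_def)

lemma alternate_snoc_after_partner:
  assumes "y \<in> set Z" "x \<notin> set Z" "y \<noteq> x"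
  shows "alternate (W @ Z @ [x]) x y \<longleftrightarrow> alternate (W @ Z) x y"
proof -
  let ?f = "filter (\<lambda>c. c = x \<or> c = y)"
  have "?f Z \<noteq> []" and "set (?f Z) \<subseteq> {y}"
    using assms by (auto simp: filter_empty_conv)
  then have "last (?f (W @ Z)) = y"
    using last_in_set[of "?f Z"] by auto
  then have "last (?f (W @ Z)) \<noteq> x"
    using assms(3) by simp
  then show ?thesis
    unfolding alternate_iff_successively
    using successively_append_iff[of "(\<noteq>)" "?f (W @ Z)" "[x]"] by simp
qed

theorem mainTheorem2:
  fixes V :: "'a set" and E :: "'a \<Rightarrow> 'a \<Rightarrow> bool" and x :: 'a and U Z :: "'a list"
  assumes "simple_graph V E"
    and "x \<in> V"
    and "represents V E (U @ [x] @ Z @ [x])"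
    and "x \<notin> set Z"
    and "V - {x} \<subseteq> set Z"
  shows "represents V E (U @ [x] @ Z)"
proof -
  have with_x: "alternate (U @ [x] @ Z @ [x]) x y \<longleftrightarrow> alternate (U @ [x] @ Z) x y"
    if "y \<in> V" "y \<noteq> x" for y
    using alternate_snoc_after_partner[of y Z x "U @ [x]"] that assms(4,5) by auto
  have "alternate (U @ [x] @ Z @ [x]) a b \<longleftrightarrow> alternate (U @ [x] @ Z) a b"
    if "a \<in> V" "b \<in> V" "a \<noteq> b" for a b
    using that with_x[of a] with_x[of b] alternate_snoc_other[of a x b "U @ [x] @ Z"]
      alternate_commute[of _ a b]
    by (cases "a = x") auto
  then show ?thesis
    using assms(2,3) unfolding represents_def by auto
qed

end
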